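(* Let $A$ and $B$ be self-adjoint operators on the same complex Hilbert space, and suppose that $B$ is bounded and non-negative. If $\sigma(A + tB) = \sigma(A)$ for all $t \in \mathbb{R}$, then $B = 0$ or $\sigma(A) = \mathbb{R}$.
   Context: $\sigma(T)$ denotes the spectrum of an operator $T$. $A$ may be unbounded; $A+tB$ is defined on the domain of $A$. *)

theory Defs
  imports Complex_Main
begin

text \<open>A complex Hilbert space is modelled by a carrier type 'a (an abelian group),
  a complex scalar multiplication scl and an inner product ip that is linear in the
  first argument and conjugate-linear in the second, positive definite, and complete
  for the induced norm.\<close>

definition hnorm :: "('a \<Rightarrow> 'a \<Rightarrow> complex) \<Rightarrow> 'a \<Rightarrow> real" where
  "hnorm ip x = sqrt (Re (ip x x))"

definition complex_hilbert_space ::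
  "(complex \<Rightarrow> 'a::ab_group_add \<Rightarrow> 'a) \<Rightarrow> ('a \<Rightarrow> 'a \<Rightarrow> complex) \<Rightarrow> bool" where
  "complex_hilbert_space scl ip \<longleftrightarrow>
     vector_space scl \<and>
     (\<forall>a x y z. ip (scl a x + y) z = a * ip x z + ip y z) \<and>
     (\<forall>x y. ip x y = cnj (ip y x)) \<and>
     (\<forall>x. 0 \<le> Re (ip x x)) \<and>
     (\<forall>x. ip x x = 0 \<longrightarrow> x = 0) \<and>
     (\<forall>f :: nat \<Rightarrow> 'a.
        (\<forall>e>0. \<exists>N. \<forall>m\<ge>N. \<forall>n\<ge>N. hnorm ip (f m - f n) < e) \<longrightarrow>
        (\<exists>x. \<forall>e>0. \<exists>N. \<forall>n\<ge>N. hnorm ip (f n - x) < e))"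

definition linear_op_on ::
  "(complex \<Rightarrow> 'a::ab_group_add \<Rightarrow> 'a) \<Rightarrow> 'a set \<Rightarrow> ('a \<Rightarrow> 'a) \<Rightarrow> bool" where
  "linear_op_on scl D T \<longleftrightarrow>
     0 \<in> D \<and> (\<forall>x\<in>D. \<forall>y\<in>D. x + y \<in> D) \<and> (\<forall>a. \<forall>x\<in>D. scl a x \<in> D) \<and>
     (\<forall>x\<in>D. \<forall>y\<in>D. T (x + y) = T x + T y) \<and> (\<forall>a. \<forall>x\<in>D. T (scl a x) = scl a (T x))"

text \<open>Self-adjoint operator: densely defined, linear, and equal to its adjoint
  (symmetric, and the adjoint's domain is contained in D with A* = A there).\<close>

definition self_adjoint_op ::
  "(complex \<Rightarrow> 'a::ab_group_add \<Rightarrow> 'a) \<Rightarrow> ('a \<Rightarrow> 'a \<Rightarrow> complex) \<Rightarrow> 'a set \<Rightarrow> ('a \<Rightarrow> 'a) \<Rightarrow> bool" where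
  "self_adjoint_op scl ip D A \<longleftrightarrow>
     linear_op_on scl D A \<and>
     (\<forall>x. \<forall>e>0. \<exists>y\<in>D. hnorm ip (x - y) < e) \<and>
     (\<forall>x\<in>D. \<forall>y\<in>D. ip (A x) y = ip x (A y)) \<and>
     (\<forall>y z. (\<forall>x\<in>D. ip (A x) y = ip x z) \<longrightarrow> y \<in> D \<and> A y = z)"

definition bounded_op ::
  "('a::ab_group_add \<Rightarrow> 'a \<Rightarrow> complex) \<Rightarrow> ('a \<Rightarrow> 'a) \<Rightarrow> bool" where
  "bounded_op ip B \<longleftrightarrow> (\<exists>C. \<forall>x. hnorm ip (B x) \<le> C * hnorm ip x)"

definition nonneg_op ::
  "('a::ab_group_add \<Rightarrow> 'a \<Rightarrow> complex) \<Rightarrow> ('a \<Rightarrow> 'a) \<Rightarrow> bool" where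
  "nonneg_op ip B \<longleftrightarrow> (\<forall>x. Im (ip (B x) x) = 0 \<and> 0 \<le> Re (ip (B x) x))"

definition op_spectrum ::
  "(complex \<Rightarrow> 'a::ab_group_add \<Rightarrow> 'a) \<Rightarrow> ('a \<Rightarrow> 'a \<Rightarrow> complex) \<Rightarrow> 'a set \<Rightarrow> ('a \<Rightarrow> 'a) \<Rightarrow> complex set" where
  "op_spectrum scl ip D T =
     {l. \<not> (bij_betw (\<lambda>x. scl l x - T x) D UNIV \<and>
            (\<exists>C. \<forall>y. hnorm ip (the_inv_into D (\<lambda>x. scl l x - T x) y) \<le> C * hnorm ip y))}"

end

theory Submission
  imports Defs
begin

(* Self-adjointness puts sigma(A) inside the real line, so it suffices to show that B = 0 as soon as
   some real l lies in the resolvent set of A. Let R be the resolvent (l - A)^-1. If (R Bx0, Bx0) were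
   nonzero, a variational argument on the quadratic form of B would give M > 0 and approximate
   eigenvectors Bx of BQ with eigenvalue M, where Q = +-R; then the vectors R Bx are approximate
   eigenvectors of A + (+-1/M) B with eigenvalue l (Birman-Schwinger), against the invariance of the
   spectrum. Hence (R_m y, y) = 0 for y in the range of B and every real m in the resolvent set,
   which is open. For m close to l the resolvent identity makes R_l y and R_m y orthogonal and
   close to each other, which forces R_l y = 0 and so y = 0. *)

locale hilbert_space =
  fixes scl :: "complex \<Rightarrow> 'a::ab_group_add \<Rightarrow> 'a" and ip :: "'a \<Rightarrow> 'a \<Rightarrow> complex"
  assumes complex_hilbert_space: "complex_hilbert_space scl ip"

sublocale hilbert_space \<subseteq> vs: vector_space scl
  using complex_hilbert_space unfolding complex_hilbert_space_def by blast

context hilbert_space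
begin

abbreviation hn :: "'a \<Rightarrow> real" ("\<parallel>_\<parallel>") where "\<parallel>x\<parallel> \<equiv> hnorm ip x"

section \<open>Inner product geometry\<close>

lemma ip_linear_left: "ip (scl a x + y) z = a * ip x z + ip y z"
  and ip_cnj_commute: "ip x y = cnj (ip y x)"
  and ip_self_Re_nonneg: "0 \<le> Re (ip x x)"
  and ip_self_eq_0: "ip x x = 0 \<Longrightarrow> x = 0"
  using complex_hilbert_space unfolding complex_hilbert_space_def by blast+

lemma Cauchy_converges:
  fixes f :: "nat \<Rightarrow> 'a"
  assumes "\<forall>e>0. \<exists>N. \<forall>m\<ge>N. \<forall>n\<ge>N. \<parallel>f m - f n\<parallel> < e"
  shows "\<exists>x. \<forall>e>0. \<exists>N. \<forall>n\<ge>N. \<parallel>f n - x\<parallel> < e"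
proof -
  have "\<forall>f :: nat \<Rightarrow> 'a. (\<forall>e>0. \<exists>N. \<forall>m\<ge>N. \<forall>n\<ge>N. \<parallel>f m - f n\<parallel> < e) \<longrightarrow>
      (\<exists>x. \<forall>e>0. \<exists>N. \<forall>n\<ge>N. \<parallel>f n - x\<parallel> < e)"
    using complex_hilbert_space unfolding complex_hilbert_space_def by (elim conjE)
  thus ?thesis using assms by blast
qed

lemma ip_add_left: "ip (x + y) z = ip x z + ip y z"
  using ip_linear_left[of 1 x y z] by simp

lemma ip_zero_left [simp]: "ip 0 z = 0"
  using ip_add_left[of 0 0 z] by simp

lemma ip_scale_left: "ip (scl a x) z = a * ip x z"
  using ip_linear_left[of a x 0 z] by simp

lemma ip_diff_left: "ip (x - y) z = ip x z - ip y z"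
  using ip_linear_left[of "-1" y x z] by simp

lemma ip_add_right: "ip z (x + y) = ip z x + ip z y"
  by (metis ip_cnj_commute ip_add_left complex_cnj_add)

lemma ip_scale_right: "ip z (scl a x) = cnj a * ip z x"
  by (metis ip_cnj_commute ip_scale_left complex_cnj_mult)

lemma ip_diff_right: "ip z (x - y) = ip z x - ip z y"
  by (metis ip_cnj_commute ip_diff_left complex_cnj_diff)

lemma hn_nonneg [simp]: "0 \<le> \<parallel>x\<parallel>"
  unfolding hnorm_def using ip_self_Re_nonneg[of x] by simp

lemma hn_sq: "\<parallel>x\<parallel>^2 = Re (ip x x)"
  unfolding hnorm_def using ip_self_Re_nonneg[of x] by simp

lemma ip_self: "ip x x = of_real (\<parallel>x\<parallel>^2)"
proof -
  have "Im (ip x x) = 0"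
    using ip_cnj_commute[of x x] by (metis cnj.sel(2) neg_equal_zero)
  thus ?thesis by (simp add: hn_sq complex_eq_iff)
qed

lemma hn_eq_0_iff [simp]: "\<parallel>x\<parallel> = 0 \<longleftrightarrow> x = 0"
  using ip_self[of x] ip_self_eq_0[of x] by (auto simp: hnorm_def)

lemma hn_zero [simp]: "\<parallel>0\<parallel> = 0"
  by simp

lemma hn_le_0_iff [simp]: "\<parallel>x\<parallel> \<le> 0 \<longleftrightarrow> x = 0"
  using hn_nonneg[of x] hn_eq_0_iff[of x] by linarith

lemma hn_gt_0_iff [simp]: "0 < \<parallel>x\<parallel> \<longleftrightarrow> x \<noteq> 0"
  using hn_nonneg[of x] hn_eq_0_iff[of x] by linarith

lemma hermitian_form_quadratic_nonneg:
  fixes p :: "'a \<Rightarrow> 'a \<Rightarrow> complex"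
  assumes add: "\<And>x y z. p (x + y) z = p x z + p y z"
    and scale: "\<And>a x z. p (scl a x) z = a * p x z"
    and herm: "\<And>x y. p x y = cnj (p y x)"
    and pos: "\<And>x. 0 \<le> Re (p x x)"
  shows "0 \<le> Re (p x x) - 2 * s * (cmod (p x y))^2 + s^2 * (cmod (p x y))^2 * Re (p y y)"
proof -
  have add2: "\<And>x y z. p z (x + y) = p z x + p z y"
    by (metis herm add complex_cnj_add)
  have scale2: "\<And>a x z. p z (scl a x) = cnj a * p z x"
    by (metis herm scale complex_cnj_mult)
  have real: "p x x = of_real (Re (p x x))" for x
    using herm[of x x] by (metis cnj.sel(2) complex_eq_iff neg_equal_zero Im_complex_of_real Re_complex_of_real)
  define w where "w = p x y"
  have pyx: "p y x = cnj w" unfolding w_def using herm by metis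
  define b where "b = - (of_real s) * w"
  have "p (x + scl b y) (x + scl b y) = p x x + cnj b * p x y + b * p y x + b * cnj b * p y y"
    by (simp add: add add2 scale scale2 algebra_simps)
  also have "\<dots> = p x x - 2 * of_real s * w * cnj w + (of_real s)^2 * (w * cnj w) * p y y"
    unfolding b_def pyx w_def[symmetric] by (simp add: algebra_simps power2_eq_square)
  also have "\<dots> = of_real (Re (p x x) - 2 * s * (cmod w)^2 + s^2 * (cmod w)^2 * Re (p y y))"
    by (subst real[of x], subst real[of y]) (simp add: complex_norm_square[symmetric] algebra_simps)
  finally show ?thesis using pos[of "x + scl b y"] unfolding w_def by simp
qed

lemma hermitian_form_cauchy_schwarz:
  fixes p :: "'a \<Rightarrow> 'a \<Rightarrow> complex"
  assumes add: "\<And>x y z. p (x + y) z = p x z + p y z"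
    and scale: "\<And>a x z. p (scl a x) z = a * p x z"
    and herm: "\<And>x y. p x y = cnj (p y x)"
    and pos: "\<And>x. 0 \<le> Re (p x x)"
  shows "(cmod (p x y))^2 \<le> Re (p x x) * Re (p y y)"
proof -
  note expand = hermitian_form_quadratic_nonneg[of p, OF add scale herm pos, where x = x and y = y]
  define w where "w = cmod (p x y)"
  show ?thesis
  proof (cases "w = 0")
    case True
    thus ?thesis using pos[of x] pos[of y] unfolding w_def by simp
  next
    case False
    hence w: "w^2 > 0" by simp
    show ?thesis
    proof (cases "Re (p y y) = 0")
      case True
      have "0 \<le> Re (p x x) - 2 * ((Re (p x x) + 1) / (2 * w^2)) * w^2"
        using expand[of "(Re (p x x) + 1) / (2 * w^2)"] True unfolding w_def by simp
      also have "\<dots> = -1" using w by (simp add: field_simps)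
      finally show ?thesis by simp
    next
      case False
      hence r: "Re (p y y) > 0" using pos[of y] by simp
      have "0 \<le> Re (p x x) - 2 * (1 / Re (p y y)) * w^2 + (1 / Re (p y y))^2 * w^2 * Re (p y y)"
        using expand unfolding w_def by blast
      also have "\<dots> = Re (p x x) - w^2 / Re (p y y)"
        using r by (simp add: field_simps power2_eq_square)
      finally show ?thesis unfolding w_def using r by (simp add: field_simps)
    qed
  qed
qed

lemma ip_cauchy_schwarz: "cmod (ip x y) \<le> \<parallel>x\<parallel> * \<parallel>y\<parallel>"
proof -
  have "(cmod (ip x y))^2 \<le> (\<parallel>x\<parallel> * \<parallel>y\<parallel>)^2"
    using hermitian_form_cauchy_schwarz[of ip, OF ip_add_left ip_scale_left ip_cnj_commute
        ip_self_Re_nonneg]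
    by (simp add: hn_sq power_mult_distrib)
  thus ?thesis by (rule power2_le_imp_le) simp
qed

lemma hn_add_sq: "\<parallel>x + y\<parallel>^2 = \<parallel>x\<parallel>^2 + \<parallel>y\<parallel>^2 + 2 * Re (ip x y)"
proof -
  have "Re (ip y x) = Re (ip x y)" using ip_cnj_commute[of y x] by simp
  thus ?thesis unfolding hn_sq by (simp add: ip_add_left ip_add_right)
qed

lemma hn_diff_sq: "\<parallel>x - y\<parallel>^2 = \<parallel>x\<parallel>^2 + \<parallel>y\<parallel>^2 - 2 * Re (ip x y)"
proof -
  have "Re (ip y x) = Re (ip x y)" using ip_cnj_commute[of y x] by simp
  thus ?thesis unfolding hn_sq by (simp add: ip_diff_left ip_diff_right)
qed

lemma hn_parallelogram: "\<parallel>x + y\<parallel>^2 + \<parallel>x - y\<parallel>^2 = 2 * \<parallel>x\<parallel>^2 + 2 * \<parallel>y\<parallel>^2"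
  unfolding hn_add_sq hn_diff_sq by simp

lemma hn_triangle: "\<parallel>x + y\<parallel> \<le> \<parallel>x\<parallel> + \<parallel>y\<parallel>"
proof -
  have "Re (ip x y) \<le> \<parallel>x\<parallel> * \<parallel>y\<parallel>"
    using ip_cauchy_schwarz[of x y] complex_Re_le_cmod order_trans by blast
  hence "\<parallel>x + y\<parallel>^2 \<le> (\<parallel>x\<parallel> + \<parallel>y\<parallel>)^2"
    unfolding hn_add_sq by (simp add: power2_eq_square algebra_simps)
  thus ?thesis using power2_le_imp_le by fastforce
qed

lemma hn_scale: "\<parallel>scl a x\<parallel> = cmod a * \<parallel>x\<parallel>"
proof -
  have "ip (scl a x) (scl a x) = (a * cnj a) * ip x x"
    by (simp add: ip_scale_left ip_scale_right)
  also have "\<dots> = of_real ((cmod a * \<parallel>x\<parallel>)^2)"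
    by (simp add: complex_norm_square[symmetric] ip_self[of x] power_mult_distrib)
  finally have "\<parallel>scl a x\<parallel>^2 = (cmod a * \<parallel>x\<parallel>)^2" by (simp add: hn_sq)
  thus ?thesis by simp
qed

lemma hn_minus [simp]: "\<parallel>- x\<parallel> = \<parallel>x\<parallel>"
  using hn_scale[of "-1" x] by simp

lemma hn_minus_commute: "\<parallel>x - y\<parallel> = \<parallel>y - x\<parallel>"
  using hn_minus[of "x - y"] by simp

lemma hn_triangle_diff: "\<parallel>x - z\<parallel> \<le> \<parallel>x - y\<parallel> + \<parallel>y - z\<parallel>"
  using hn_triangle[of "x - y" "y - z"] by simp

lemma hn_ge_if_cmod_ip_ge:
  assumes "a \<le> cmod (ip z w)" and "\<parallel>w\<parallel> \<le> b"
  shows "a / (b + 1) \<le> \<parallel>z\<parallel>"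
proof -
  have "a \<le> \<parallel>z\<parallel> * b"
    using assms ip_cauchy_schwarz[of z w] mult_left_mono[OF assms(2) hn_nonneg[of z]] by linarith
  also have "\<dots> \<le> \<parallel>z\<parallel> * (b + 1)" by (simp add: mult_left_mono)
  finally have "a \<le> \<parallel>z\<parallel> * (b + 1)" .
  moreover have "0 < b + 1" using hn_nonneg[of w] assms(2) by linarith
  ultimately show ?thesis by (simp add: pos_divide_le_eq mult.commute)
qed

section \<open>Convergence and best approximation\<close>

definition converges_to :: "(nat \<Rightarrow> 'a) \<Rightarrow> 'a \<Rightarrow> bool" where
  "converges_to f x \<longleftrightarrow> (\<lambda>n. \<parallel>f n - x\<parallel>) \<longlonglongrightarrow> 0"

lemma converges_toI_bound:
  assumes "\<And>n. \<parallel>f n - x\<parallel> \<le> b n" and "b \<longlonglongrightarrow> 0"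
  shows "converges_to f x"
  unfolding converges_to_def
  by (rule real_tendsto_sandwich[of "\<lambda>_. 0" _ _ b]) (use assms in auto)

lemma converges_to_lincomb:
  assumes "converges_to f x" and "converges_to g y"
  shows "converges_to (\<lambda>n. scl a (f n) + scl b (g n)) (scl a x + scl b y)"
proof (rule converges_toI_bound)
  fix n
  have "scl a (f n) + scl b (g n) - (scl a x + scl b y) = scl a (f n - x) + scl b (g n - y)"
    by (simp add: algebra_simps)
  thus "\<parallel>scl a (f n) + scl b (g n) - (scl a x + scl b y)\<parallel>
      \<le> cmod a * \<parallel>f n - x\<parallel> + cmod b * \<parallel>g n - y\<parallel>"
    using hn_triangle by (metis hn_scale)
  show "(\<lambda>n. cmod a * \<parallel>f n - x\<parallel> + cmod b * \<parallel>g n - y\<parallel>) \<longlonglongrightarrow> 0"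
    using assms unfolding converges_to_def
    by (auto intro!: tendsto_add_zero tendsto_mult_right_zero)
qed

lemma converges_to_ip_right:
  assumes "converges_to f x"
  shows "(\<lambda>n. ip w (f n)) \<longlonglongrightarrow> ip w x"
proof (rule LIM_zero_cancel, rule tendsto_0_le)
  show "(\<lambda>n. \<parallel>f n - x\<parallel>) \<longlonglongrightarrow> 0" using assms unfolding converges_to_def .
  show "\<forall>\<^sub>F n in sequentially. norm (ip w (f n) - ip w x) \<le> norm \<parallel>f n - x\<parallel> * \<parallel>w\<parallel>"
    using ip_cauchy_schwarz by (simp add: ip_diff_right[symmetric] mult.commute)
qed

lemma hn_le_of_converges_to:
  assumes "converges_to g y" and "\<And>k. \<parallel>f - g k\<parallel> \<le> d + 1 / (real k + 1)"
  shows "\<parallel>f - y\<parallel> \<le> d"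
proof (rule LIMSEQ_le_const)
  have "(\<lambda>k. inverse (real (Suc k))) \<longlonglongrightarrow> 0" by (rule LIMSEQ_inverse_real_of_nat)
  hence "(\<lambda>k. 1 / (real k + 1)) \<longlonglongrightarrow> 0" by (simp add: divide_inverse add.commute)
  hence "(\<lambda>k. d + 1 / (real k + 1) + \<parallel>g k - y\<parallel>) \<longlonglongrightarrow> d + 0 + 0"
    using assms(1) unfolding converges_to_def by (intro tendsto_add tendsto_const)
  thus "(\<lambda>k. d + 1 / (real k + 1) + \<parallel>g k - y\<parallel>) \<longlonglongrightarrow> d" by simp
  have "\<parallel>f - y\<parallel> \<le> d + 1 / (real k + 1) + \<parallel>g k - y\<parallel>" for k
    using assms(2)[of k] hn_triangle_diff[of f y "g k"] by linarith
  thus "\<exists>N. \<forall>k\<ge>N. \<parallel>f - y\<parallel> \<le> d + 1 / (real k + 1) + \<parallel>g k - y\<parallel>" by blast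
qed

lemma converges_if_sq_dist_le:
  fixes g :: "nat \<Rightarrow> 'a"
  assumes K: "\<And>j k. \<parallel>g j - g k\<parallel>^2 \<le> K * (1/(real j+1) + 1/(real k+1))"
  shows "\<exists>x. converges_to g x"
proof -
  have "\<exists>N. \<forall>m\<ge>N. \<forall>n\<ge>N. \<parallel>g m - g n\<parallel> < e" if e: "e > 0" for e
  proof -
    obtain N :: nat where N: "(\<bar>K\<bar> * 2 + 1) / e^2 < real N"
      using reals_Archimedean2 by blast
    have "\<bar>K\<bar> * 2 < e^2 * (real N + 1)"
      using N e by (simp add: field_simps) (smt (verit) zero_le_power2)
    hence Ne: "\<bar>K\<bar> * (2 / (real N + 1)) < e^2" by (simp add: field_simps)
    have "\<parallel>g m - g n\<parallel> < e" if "m \<ge> N" "n \<ge> N" for m n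
    proof -
      have "1/(real m+1) \<le> 1/(real N+1)" "1/(real n+1) \<le> 1/(real N+1)"
        using that by (simp_all add: frac_le)
      hence "1/(real m+1) + 1/(real n+1) \<le> 2/(real N+1)" by simp
      hence "\<parallel>g m - g n\<parallel>^2 \<le> \<bar>K\<bar> * (2/(real N+1))"
        using K[of m n] by (smt (verit) abs_ge_self divide_nonneg_nonneg mult_right_mono
            mult_left_mono of_nat_0_le_iff abs_ge_zero)
      thus ?thesis using Ne e by (smt (verit) hn_nonneg power_mono)
    qed
    thus ?thesis by blast
  qed
  then obtain x where "\<forall>e>0. \<exists>N. \<forall>n\<ge>N. \<parallel>g n - x\<parallel> < e" using Cauchy_converges by blast
  hence "(\<lambda>n. \<parallel>g n - x\<parallel>) \<longlonglongrightarrow> 0"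
    by (intro metric_LIMSEQ_I) (simp add: dist_real_def)
  thus ?thesis unfolding converges_to_def by blast
qed

lemma sq_dist_le_if_near_minimal:
  assumes mid: "d \<le> \<parallel>f - scl (1/2) (u + v)\<parallel>" and "0 \<le> d"
    and u: "\<parallel>f - u\<parallel>^2 \<le> d^2 + a" and v: "\<parallel>f - v\<parallel>^2 \<le> d^2 + b"
  shows "\<parallel>u - v\<parallel>^2 \<le> 2 * a + 2 * b"
proof -
  have "(f - u) + (f - v) = scl 2 (f - scl (1/2) (u + v))"
    using vs.scale_left_distrib[of 1 1 f]
    by (simp add: algebra_simps)
  hence "\<parallel>(f - u) + (f - v)\<parallel> = 2 * \<parallel>f - scl (1/2) (u + v)\<parallel>" by (simp add: hn_scale)
  hence "4 * d^2 \<le> \<parallel>(f - u) + (f - v)\<parallel>^2"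
    using mid \<open>0 \<le> d\<close> by (simp add: power_mult_distrib power_mono)
  moreover have "\<parallel>(f - u) + (f - v)\<parallel>^2 + \<parallel>u - v\<parallel>^2 = 2 * \<parallel>f - u\<parallel>^2 + 2 * \<parallel>f - v\<parallel>^2"
    using hn_parallelogram[of "f - u" "f - v"] hn_minus_commute[of u v] by simp
  ultimately show ?thesis using u v by linarith
qed

lemma minimizing_sequence:
  assumes "s0 \<in> S" and mid: "\<And>u v. u \<in> S \<Longrightarrow> v \<in> S \<Longrightarrow> scl (1/2) (u + v) \<in> S"
  obtains d K ss where "\<And>s. s \<in> S \<Longrightarrow> d \<le> \<parallel>f - s\<parallel>"
    and "\<And>k. ss k \<in> S" and "\<And>k. \<parallel>f - ss k\<parallel> \<le> d + 1 / (real k + 1)"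
    and "\<And>j k. \<parallel>ss j - ss k\<parallel>^2 \<le> K * (1 / (real j + 1) + 1 / (real k + 1))"
proof -
  define d where "d = Inf {\<parallel>f - s\<parallel> | s. s \<in> S}"
  have bdd: "bdd_below {\<parallel>f - s\<parallel> | s. s \<in> S}" by (rule bdd_belowI[of _ 0]) auto
  have d_le: "d \<le> \<parallel>f - s\<parallel>" if "s \<in> S" for s
    unfolding d_def using that by (intro cInf_lower[OF _ bdd]) auto
  have "0 \<le> d" unfolding d_def using \<open>s0 \<in> S\<close> by (intro cInf_greatest) auto
  have "\<exists>s. s \<in> S \<and> \<parallel>f - s\<parallel> < d + 1 / (real k + 1)" for k
    using cInf_lessD[of "{\<parallel>f - s\<parallel> | s. s \<in> S}" "d + 1 / (real k + 1)"] \<open>s0 \<in> S\<close>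
    unfolding d_def by fastforce
  then obtain ss where ss: "\<And>k. ss k \<in> S" and ss_near: "\<And>k. \<parallel>f - ss k\<parallel> < d + 1 / (real k + 1)"
    by metis
  have ss_sq: "\<parallel>f - ss k\<parallel>^2 \<le> d^2 + (2 * d + 1) * (1 / (real k + 1))" for k
  proof -
    define u where "u = 1 / (real k + 1)"
    have "0 < u" "u \<le> 1" unfolding u_def by (auto simp: field_simps)
    have "\<parallel>f - ss k\<parallel>^2 \<le> (d + u)^2"
      using ss_near[of k] unfolding u_def[symmetric] by (intro power_mono) auto
    also have "\<dots> \<le> d^2 + 2 * d * u + u"
      using \<open>0 < u\<close> \<open>u \<le> 1\<close> by (simp add: power2_eq_square algebra_simps mult_left_le)
    finally show ?thesis unfolding u_def[symmetric] by (simp add: algebra_simps)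
  qed
  have "\<parallel>ss j - ss k\<parallel>^2 \<le> 2 * (2 * d + 1) * (1 / (real j + 1) + 1 / (real k + 1))" for j k
    using sq_dist_le_if_near_minimal[OF d_le[OF mid[OF ss ss]] \<open>0 \<le> d\<close> ss_sq ss_sq]
    by (simp add: algebra_simps)
  thus thesis using that[OF d_le ss less_imp_le[OF ss_near]] by blast
qed

lemma orthogonal_if_minimal_along:
  assumes min: "\<And>b. \<parallel>r\<parallel> \<le> \<parallel>r - scl b u\<parallel>"
  shows "ip u r = 0"
proof (rule ccontr)
  assume "ip u r \<noteq> 0"
  define \<beta> where "\<beta> = ip r u"
  have \<beta>: "(cmod \<beta>)^2 > 0"
    using \<open>ip u r \<noteq> 0\<close> ip_cnj_commute[of u r] by (simp add: \<beta>_def)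
  define s where "s = 1 / (\<parallel>u\<parallel>^2 + 1)"
  have u: "0 \<le> \<parallel>u\<parallel>^2" by simp
  have s: "s > 0" "s * \<parallel>u\<parallel>^2 < 1"
    unfolding s_def using u by (simp_all add: add_nonneg_pos divide_less_eq)
  have "ip r (scl (of_real s * \<beta>) u) = of_real (s * (cmod \<beta>)^2)"
    by (simp add: ip_scale_right \<beta>_def[symmetric] complex_norm_square[symmetric] mult.commute[of "cnj \<beta>"])
  hence "\<parallel>r - scl (of_real s * \<beta>) u\<parallel>^2 = \<parallel>r\<parallel>^2 + (s * cmod \<beta>)^2 * \<parallel>u\<parallel>^2 - 2 * (s * (cmod \<beta>)^2)"
    using s by (simp add: hn_diff_sq hn_scale norm_mult power_mult_distrib)
  moreover have "\<parallel>r\<parallel>^2 \<le> \<parallel>r - scl (of_real s * \<beta>) u\<parallel>^2"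
    using min by (simp add: power_mono)
  ultimately have "2 * (s * (cmod \<beta>)^2) \<le> (s * \<parallel>u\<parallel>^2) * (s * (cmod \<beta>)^2)"
    by (simp add: power2_eq_square algebra_simps)
  moreover have "0 < s * (cmod \<beta>)^2" using \<beta> s by simp
  ultimately have "2 \<le> s * \<parallel>u\<parallel>^2" using mult_le_cancel_right_pos by blast
  thus False using s by simp
qed

section \<open>Bounded Hermitian operators\<close>

lemma bounded_opE:
  assumes "bounded_op ip T"
  obtains K where "0 \<le> K" and "\<And>x. \<parallel>T x\<parallel> \<le> K * \<parallel>x\<parallel>"
proof -
  obtain C where C: "\<And>x. \<parallel>T x\<parallel> \<le> C * \<parallel>x\<parallel>"
    using assms unfolding bounded_op_def by blast
  have "C * \<parallel>x\<parallel> \<le> max C 0 * \<parallel>x\<parallel>" for x by (rule mult_right_mono) simp_all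
  thus thesis using that[of "max C 0"] C order_trans by fastforce
qed

definition bounded_hermitian :: "('a \<Rightarrow> 'a) \<Rightarrow> bool" where
  "bounded_hermitian T \<longleftrightarrow>
     (\<forall>x y. T (x + y) = T x + T y) \<and> (\<forall>a x. T (scl a x) = scl a (T x)) \<and>
     (\<forall>x y. ip (T x) y = ip x (T y)) \<and> bounded_op ip T"

lemma bounded_hermitianD:
  assumes "bounded_hermitian T"
  shows "T (x + y) = T x + T y" and "T (scl a x) = scl a (T x)" and "ip (T x) y = ip x (T y)"
    and "bounded_op ip T"
  using assms unfolding bounded_hermitian_def by blast+

lemma bounded_hermitian_scale_real:
  assumes "bounded_hermitian T"
  shows "bounded_hermitian (\<lambda>x. scl (of_real s) (T x))"
proof -
  obtain K where "0 \<le> K" and K: "\<And>x. \<parallel>T x\<parallel> \<le> K * \<parallel>x\<parallel>"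
    using bounded_opE[OF bounded_hermitianD(4)[OF assms]] by blast
  have "\<parallel>scl (of_real s) (T x)\<parallel> \<le> (\<bar>s\<bar> * K) * \<parallel>x\<parallel>" for x
    using mult_left_mono[OF K[of x], of "\<bar>s\<bar>"] by (simp add: hn_scale mult.assoc)
  hence "bounded_op ip (\<lambda>x. scl (of_real s) (T x))" unfolding bounded_op_def by blast
  thus ?thesis
    unfolding bounded_hermitian_def
    by (simp add: bounded_hermitianD[OF assms] vs.scale_right_distrib ip_scale_left ip_scale_right
        mult.commute)
qed

lemma ip_scale_both: "ip (scl a x) (scl a y) = of_real ((cmod a)^2) * ip x y"
  by (simp add: ip_scale_left ip_scale_right complex_norm_square[symmetric] mult.commute[of "cnj a"])

lemma cmod_ip_le_bound:
  assumes "\<And>x. \<parallel>T x\<parallel> \<le> K * \<parallel>x\<parallel>" and "0 \<le> K"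
  shows "cmod (ip (T y) y) \<le> K * \<parallel>y\<parallel>^2"
proof -
  have "cmod (ip (T y) y) \<le> \<parallel>T y\<parallel> * \<parallel>y\<parallel>" by (rule ip_cauchy_schwarz)
  also have "\<dots> \<le> K * \<parallel>y\<parallel> * \<parallel>y\<parallel>" using assms by (intro mult_right_mono) auto
  finally show ?thesis by (simp add: power2_eq_square mult.assoc)
qed

lemma hermitian_form_nonneg_cauchy_schwarz:
  assumes "bounded_hermitian B" and "nonneg_op ip B"
  shows "(cmod (ip (B x) y))^2 \<le> Re (ip (B x) x) * Re (ip (B y) y)"
proof (rule hermitian_form_cauchy_schwarz[of "\<lambda>u v. ip (B u) v"])
  show "ip (B x) y = cnj (ip (B y) x)" for x y
    using bounded_hermitianD(3)[OF assms(1)] ip_cnj_commute by metis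
qed (use assms in \<open>auto simp: bounded_hermitianD ip_add_left ip_scale_left nonneg_op_def\<close>)

lemma hn_sq_le_form:
  assumes B: "bounded_hermitian B" "nonneg_op ip B"
    and K: "\<And>x. \<parallel>B x\<parallel> \<le> K * \<parallel>x\<parallel>" "0 \<le> K"
  shows "\<parallel>B x\<parallel>^2 \<le> K * Re (ip (B x) x)"
proof (cases "B x = 0")
  case True
  thus ?thesis using B(2) K(2) by (simp add: nonneg_op_def)
next
  case False
  have "(\<parallel>B x\<parallel>^2)^2 = (cmod (ip (B x) (B x)))^2" by (simp add: ip_self norm_power)
  also have "\<dots> \<le> Re (ip (B x) x) * Re (ip (B (B x)) (B x))"
    by (rule hermitian_form_nonneg_cauchy_schwarz[OF B])
  also have "\<dots> \<le> Re (ip (B x) x) * (K * \<parallel>B x\<parallel>^2)"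
    using cmod_ip_le_bound[OF K, of "B x"] complex_Re_le_cmod B(2)
    by (intro mult_left_mono) (auto simp: nonneg_op_def intro: order_trans)
  finally have "\<parallel>B x\<parallel>^2 * \<parallel>B x\<parallel>^2 \<le> (K * Re (ip (B x) x)) * \<parallel>B x\<parallel>^2"
    by (simp only: power2_eq_square[of "\<parallel>B x\<parallel>^2"] mult_ac)
  moreover have "0 < \<parallel>B x\<parallel>^2" using False by simp
  ultimately show ?thesis using mult_le_cancel_right_pos by blast
qed

lemma hn_le_sqrt_if_form_le_1:
  assumes "bounded_hermitian B" "nonneg_op ip B"
    and "\<And>x. \<parallel>B x\<parallel> \<le> K * \<parallel>x\<parallel>" "0 \<le> K" and "Re (ip (B x) x) \<le> 1"
  shows "\<parallel>B x\<parallel> \<le> sqrt K"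
proof -
  have "\<parallel>B x\<parallel>^2 \<le> K * Re (ip (B x) x)" by (rule hn_sq_le_form[OF assms(1-4)])
  also have "\<dots> \<le> K" using assms(4,5) by (simp add: mult_left_le)
  finally show ?thesis by (simp add: real_le_rsqrt)
qed

lemma sign_hermitian_form_pos:
  assumes sym: "\<And>u v. ip (R u) v = ip u (R v)" and "ip (R y) y \<noteq> 0"
  obtains \<sigma> :: real where "\<bar>\<sigma>\<bar> = 1" and "0 < Re (ip (scl (of_real \<sigma>) (R y)) y)"
proof -
  have "ip (R y) y = cnj (ip (R y) y)" using sym ip_cnj_commute by metis
  hence "Im (ip (R y) y) = 0" by (metis cnj.sel(2) neg_equal_zero)
  hence "Re (ip (R y) y) \<noteq> 0" using assms(2) by (simp add: complex_eq_iff)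
  hence "\<bar>sgn (Re (ip (R y) y))\<bar> = 1" and "0 < Re (ip (scl (of_real (sgn (Re (ip (R y) y)))) (R y)) y)"
    by (simp_all add: ip_scale_left sgn_real_def abs_sgn_eq)
  thus thesis by (rule that)
qed

text \<open>The least M with Q(Bx, Bx) \<le> M B(x, x) for all x is the top of the spectrum of
  B^(1/2) Q B^(1/2). Cauchy-Schwarz for the nonnegative form gap_form B Q M, taken at
  (x, M Bx - BQBx), replaces the spectral calculus for B^(1/2).\<close>

definition gap_form :: "('a \<Rightarrow> 'a) \<Rightarrow> ('a \<Rightarrow> 'a) \<Rightarrow> real \<Rightarrow> 'a \<Rightarrow> 'a \<Rightarrow> complex" where
  "gap_form B Q M u v = of_real M * ip (B u) v - ip (Q (B u)) (B v)"

lemma Re_gap_form_self: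
  "Re (gap_form B Q M x x) = M * Re (ip (B x) x) - Re (ip (Q (B x)) (B x))"
  unfolding gap_form_def by simp

lemma gap_form_cauchy_schwarz:
  assumes B: "bounded_hermitian B" and Q: "bounded_hermitian Q"
    and le: "\<And>x. Re (ip (Q (B x)) (B x)) \<le> M * Re (ip (B x) x)"
  shows "(cmod (gap_form B Q M x y))^2 \<le> Re (gap_form B Q M x x) * Re (gap_form B Q M y y)"
proof (rule hermitian_form_cauchy_schwarz)
  note B_ops = bounded_hermitianD(1-3)[OF B] and Q_ops = bounded_hermitianD(1-3)[OF Q]
  show "gap_form B Q M (u + v) w = gap_form B Q M u w + gap_form B Q M v w" for u v w
    unfolding gap_form_def by (simp add: B_ops(1) Q_ops(1) ip_add_left algebra_simps)
  show "gap_form B Q M (scl a u) w = a * gap_form B Q M u w" for a u w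
    unfolding gap_form_def by (simp add: B_ops(2) Q_ops(2) ip_scale_left algebra_simps)
  show "gap_form B Q M u v = cnj (gap_form B Q M v u)" for u v
  proof -
    have "cnj (ip (B v) u) = ip (B u) v" by (metis B_ops(3) ip_cnj_commute)
    moreover have "cnj (ip (Q (B v)) (B u)) = ip (Q (B u)) (B v)" by (metis Q_ops(3) ip_cnj_commute)
    ultimately show ?thesis unfolding gap_form_def by simp
  qed
  show "0 \<le> Re (gap_form B Q M u u)" for u using le[of u] unfolding Re_gap_form_self by simp
qed

lemma gap_form_bounded:
  assumes B: "bounded_hermitian B" and Q: "bounded_hermitian Q" and "0 \<le> M"
  obtains K where "0 \<le> K" and "\<And>y. Re (gap_form B Q M y y) \<le> K * \<parallel>y\<parallel>^2"
proof -
  obtain Kb where Kb: "0 \<le> Kb" "\<And>x. \<parallel>B x\<parallel> \<le> Kb * \<parallel>x\<parallel>"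
    using bounded_opE[OF bounded_hermitianD(4)[OF B]] by blast
  obtain Kq where Kq: "0 \<le> Kq" "\<And>x. \<parallel>Q x\<parallel> \<le> Kq * \<parallel>x\<parallel>"
    using bounded_opE[OF bounded_hermitianD(4)[OF Q]] by blast
  have "Re (gap_form B Q M y y) \<le> (M * Kb + Kq * Kb^2) * \<parallel>y\<parallel>^2" for y
  proof -
    have "M * Re (ip (B y) y) \<le> M * (Kb * \<parallel>y\<parallel>^2)"
      using \<open>0 \<le> M\<close> cmod_ip_le_bound[OF Kb(2,1), of y] complex_Re_le_cmod order_trans
      by (intro mult_left_mono) blast+
    moreover have "- Re (ip (Q (B y)) (B y)) \<le> Kq * (Kb * \<parallel>y\<parallel>)^2"
      using cmod_ip_le_bound[OF Kq(2,1), of "B y"] abs_Re_le_cmod[of "ip (Q (B y)) (B y)"]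
        mult_left_mono[OF power_mono[OF Kb(2)[of y] hn_nonneg, of 2] Kq(1)]
      by linarith
    ultimately show ?thesis unfolding Re_gap_form_self by (simp add: algebra_simps)
  qed
  moreover have "0 \<le> M * Kb + Kq * Kb^2" using \<open>0 \<le> M\<close> Kb Kq by simp
  ultimately show thesis using that by blast
qed

lemma approx_eigenvector_gap:
  assumes B: "bounded_hermitian B" and Q: "bounded_hermitian Q" and "0 \<le> M"
    and le: "\<And>x. Re (ip (Q (B x)) (B x)) \<le> M * Re (ip (B x) x)"
  obtains K where "0 \<le> K" and "\<And>x. \<parallel>scl (of_real M) (B x) - B (Q (B x))\<parallel>^2
      \<le> K * (M * Re (ip (B x) x) - Re (ip (Q (B x)) (B x)))"
proof -
  obtain K where K: "0 \<le> K" and bound: "\<And>y. Re (gap_form B Q M y y) \<le> K * \<parallel>y\<parallel>^2"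
    using gap_form_bounded[OF B Q \<open>0 \<le> M\<close>] by blast
  have "\<parallel>y\<parallel>^2 \<le> K * Re (gap_form B Q M x x)"
    if y: "y = scl (of_real M) (B x) - B (Q (B x))" for x y
  proof (cases "y = 0")
    case False
    have "gap_form B Q M x y = ip (scl (of_real M) (B x) - B (Q (B x))) y"
      unfolding gap_form_def by (simp add: bounded_hermitianD(3)[OF B] ip_diff_left ip_scale_left)
    hence "(\<parallel>y\<parallel>^2)^2 \<le> Re (gap_form B Q M x x) * Re (gap_form B Q M y y)"
      using gap_form_cauchy_schwarz[OF B Q le, of x y] y by (simp add: ip_self norm_power)
    also have "\<dots> \<le> Re (gap_form B Q M x x) * (K * \<parallel>y\<parallel>^2)"
      using le[of x] bound[of y] by (intro mult_left_mono) (auto simp: Re_gap_form_self)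
    finally have "\<parallel>y\<parallel>^2 * \<parallel>y\<parallel>^2 \<le> (K * Re (gap_form B Q M x x)) * \<parallel>y\<parallel>^2"
      by (simp only: power2_eq_square[of "\<parallel>y\<parallel>^2"] mult_ac)
    moreover have "0 < \<parallel>y\<parallel>^2" using False by simp
    ultimately show ?thesis using mult_le_cancel_right_pos by blast
  qed (use K le[of x] in \<open>simp add: Re_gap_form_self\<close>)
  from this[OF refl] show thesis using that[OF K] unfolding Re_gap_form_self by blast
qed

lemma abs_form_QB_le:
  assumes B: "bounded_hermitian B" "nonneg_op ip B"
    and Kb: "\<And>x. \<parallel>B x\<parallel> \<le> Kb * \<parallel>x\<parallel>" "0 \<le> Kb" and Kq: "\<And>x. \<parallel>Q x\<parallel> \<le> Kq * \<parallel>x\<parallel>" "0 \<le> Kq"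
  shows "\<bar>Re (ip (Q (B x)) (B x))\<bar> \<le> Kq * Kb * Re (ip (B x) x)"
proof -
  have "\<bar>Re (ip (Q (B x)) (B x))\<bar> \<le> Kq * \<parallel>B x\<parallel>^2"
    using cmod_ip_le_bound[OF Kq] abs_Re_le_cmod order_trans by blast
  also have "\<dots> \<le> Kq * (Kb * Re (ip (B x) x))"
    using hn_sq_le_form[OF B Kb] Kq(2) by (rule mult_left_mono)
  finally show ?thesis by (simp add: mult.assoc)
qed

lemma form_QB_le_if_le_on_unit_ball:
  assumes B: "bounded_hermitian B" "nonneg_op ip B" and Q: "bounded_hermitian Q"
    and le: "\<And>x. Re (ip (B x) x) \<le> 1 \<Longrightarrow> Re (ip (Q (B x)) (B x)) \<le> M"
  shows "Re (ip (Q (B x)) (B x)) \<le> M * Re (ip (B x) x)"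
proof -
  define q where "q x = Re (ip (B x) x)" for x
  define h where "h x = Re (ip (Q (B x)) (B x))" for x
  obtain Kb where Kb: "0 \<le> Kb" "\<And>x. \<parallel>B x\<parallel> \<le> Kb * \<parallel>x\<parallel>"
    using bounded_opE[OF bounded_hermitianD(4)[OF B(1)]] by blast
  obtain Kq where Kq: "0 \<le> Kq" "\<And>x. \<parallel>Q x\<parallel> \<le> Kq * \<parallel>x\<parallel>"
    using bounded_opE[OF bounded_hermitianD(4)[OF Q]] by blast
  have "0 \<le> q x" using B(2) unfolding q_def nonneg_op_def by blast
  show ?thesis
  proof (cases "q x = 0")
    case True
    thus ?thesis using abs_form_QB_le[OF B Kb(2,1) Kq(2,1), of x] unfolding q_def by simp
  next
    case False
    hence "0 < q x" using \<open>0 \<le> q x\<close> by simp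
    have scale: "q (scl a x) = (cmod a)^2 * q x" "h (scl a x) = (cmod a)^2 * h x" for a
      unfolding q_def h_def
      by (simp_all add: bounded_hermitianD(2)[OF B(1)] bounded_hermitianD(2)[OF Q] ip_scale_both)
    define y where "y = scl (of_real (1 / sqrt (q x))) x"
    have "q y = 1" and "h y = h x / q x"
      using \<open>0 < q x\<close> unfolding y_def scale norm_of_real by (simp_all add: power_divide)
    hence "h x / q x \<le> M" using le[of y] unfolding q_def h_def by simp
    thus ?thesis using \<open>0 < q x\<close> unfolding q_def h_def by (simp add: divide_le_eq mult.commute)
  qed
qed

lemma form_ratio_sup:
  assumes B: "bounded_hermitian B" "nonneg_op ip B" and Q: "bounded_hermitian Q"
    and pos: "0 < Re (ip (Q (B x0)) (B x0))"
  obtains M where "0 < M" and "\<And>x. Re (ip (Q (B x)) (B x)) \<le> M * Re (ip (B x) x)"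
    and "\<And>\<delta>. 0 < \<delta> \<Longrightarrow> \<exists>x. Re (ip (B x) x) \<le> 1 \<and> M - \<delta> < Re (ip (Q (B x)) (B x))"
proof -
  define q where "q x = Re (ip (B x) x)" for x
  define h where "h x = Re (ip (Q (B x)) (B x))" for x
  obtain Kb where Kb: "0 \<le> Kb" "\<And>x. \<parallel>B x\<parallel> \<le> Kb * \<parallel>x\<parallel>"
    using bounded_opE[OF bounded_hermitianD(4)[OF B(1)]] by blast
  obtain Kq where Kq: "0 \<le> Kq" "\<And>x. \<parallel>Q x\<parallel> \<le> Kq * \<parallel>x\<parallel>"
    using bounded_opE[OF bounded_hermitianD(4)[OF Q]] by blast
  define H where "H = {h x | x. q x \<le> 1}"
  define M where "M = Sup H"
  have "h 0 \<in> H" unfolding H_def q_def by (auto simp: bounded_hermitianD(1)[OF B(1), of 0 0, simplified])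
  hence H_ne: "H \<noteq> {}" by blast
  have "h x \<le> Kq * Kb" if "q x \<le> 1" for x
    using abs_form_QB_le[OF B Kb(2,1) Kq(2,1), of x] mult_left_le[OF that mult_nonneg_nonneg[OF Kq(1) Kb(1)]]
    unfolding q_def h_def by linarith
  hence "bdd_above H" unfolding H_def by (intro bdd_aboveI[of _ "Kq * Kb"]) blast
  hence "h x \<le> M" if "q x \<le> 1" for x
    unfolding M_def H_def using that by (auto intro!: cSup_upper)
  hence le: "h x \<le> M * q x" for x
    unfolding h_def q_def by (rule form_QB_le_if_le_on_unit_ball[OF B Q]) (simp add: h_def q_def)
  have "0 \<le> q x0" using B(2) unfolding q_def nonneg_op_def by blast
  moreover have "0 < M * q x0" using le[of x0] pos unfolding h_def by linarith
  ultimately have "0 < M" by (simp add: zero_less_mult_iff)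
  moreover have "\<exists>x. q x \<le> 1 \<and> M - \<delta> < h x" if "0 < \<delta>" for \<delta>
  proof -
    obtain s where "s \<in> H" "M - \<delta> < s" using less_cSupD[OF H_ne, of "M - \<delta>"] \<open>0 < \<delta>\<close>
      unfolding M_def by auto
    thus ?thesis unfolding H_def by blast
  qed
  ultimately show thesis using that le unfolding q_def h_def by blast
qed

lemma BQ_approx_eigenvector:
  assumes B: "bounded_hermitian B" "nonneg_op ip B" and Q: "bounded_hermitian Q"
    and pos: "0 < Re (ip (Q (B x0)) (B x0))"
  obtains M where "0 < M"
    and "\<And>e. 0 < e \<Longrightarrow> \<exists>x. Re (ip (B x) x) \<le> 1 \<and> M - e \<le> Re (ip (Q (B x)) (B x))
                       \<and> \<parallel>scl (of_real M) (B x) - B (Q (B x))\<parallel> \<le> e"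
proof -
  obtain M where M: "0 < M" and le: "\<And>x. Re (ip (Q (B x)) (B x)) \<le> M * Re (ip (B x) x)"
    and near: "\<And>\<delta>. 0 < \<delta> \<Longrightarrow> \<exists>x. Re (ip (B x) x) \<le> 1 \<and> M - \<delta> < Re (ip (Q (B x)) (B x))"
    by (rule form_ratio_sup[OF B Q pos]) blast
  obtain K where K: "0 \<le> K" and gap: "\<And>x. \<parallel>scl (of_real M) (B x) - B (Q (B x))\<parallel>^2
      \<le> K * (M * Re (ip (B x) x) - Re (ip (Q (B x)) (B x)))"
    by (rule approx_eigenvector_gap[OF B(1) Q less_imp_le[OF M] le]) blast
  have "\<exists>x. Re (ip (B x) x) \<le> 1 \<and> M - e \<le> Re (ip (Q (B x)) (B x))
                       \<and> \<parallel>scl (of_real M) (B x) - B (Q (B x))\<parallel> \<le> e" if e: "0 < e" for e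
  proof -
    define \<delta> where "\<delta> = min e (e^2 / (K + 1))"
    have "0 < \<delta>" unfolding \<delta>_def using e K by simp
    then obtain x where x: "Re (ip (B x) x) \<le> 1" and hx: "M - \<delta> < Re (ip (Q (B x)) (B x))"
      using near by blast
    have "M * Re (ip (B x) x) \<le> M" using x M by (simp add: mult_left_le)
    hence "M * Re (ip (B x) x) - Re (ip (Q (B x)) (B x)) \<le> \<delta>" using hx by linarith
    hence "\<parallel>scl (of_real M) (B x) - B (Q (B x))\<parallel>^2 \<le> K * \<delta>"
      using gap[of x] K by (meson mult_left_mono order_trans)
    also have "\<dots> \<le> K * (e^2 / (K + 1))" unfolding \<delta>_def using K by (intro mult_left_mono) auto
    also have "\<dots> \<le> e^2" using K by (simp add: field_simps)
    finally have "\<parallel>scl (of_real M) (B x) - B (Q (B x))\<parallel>^2 \<le> e^2" .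
    hence "\<parallel>scl (of_real M) (B x) - B (Q (B x))\<parallel> \<le> e"
      by (rule power2_le_imp_le) (use e in simp)
    moreover have "M - e \<le> Re (ip (Q (B x)) (B x))" using hx unfolding \<delta>_def by linarith
    ultimately show ?thesis using x by blast
  qed
  thus thesis using that M by blast
qed

section \<open>Self-adjoint operators and their spectrum\<close>

lemma approx_eigenvalue_in_spectrum:
  assumes "0 < c" and approx: "\<And>e. 0 < e \<Longrightarrow> \<exists>x\<in>D. c \<le> \<parallel>x\<parallel> \<and> \<parallel>scl l x - T x\<parallel> \<le> e"
  shows "l \<in> op_spectrum scl ip D T"
proof (rule ccontr)
  define S where "S x = scl l x - T x" for x
  assume "l \<notin> op_spectrum scl ip D T"
  then obtain C where bij: "bij_betw S D UNIV" and C: "\<And>y. \<parallel>the_inv_into D S y\<parallel> \<le> C * \<parallel>y\<parallel>"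
    unfolding op_spectrum_def S_def by blast
  define C' where "C' = max C 0"
  have "0 \<le> C'" unfolding C'_def by simp
  have "C * \<parallel>y\<parallel> \<le> C' * \<parallel>y\<parallel>" for y unfolding C'_def by (rule mult_right_mono) simp_all
  hence C': "\<parallel>the_inv_into D S y\<parallel> \<le> C' * \<parallel>y\<parallel>" for y using C order_trans by blast
  obtain x where x: "x \<in> D" "c \<le> \<parallel>x\<parallel>" and Sx: "\<parallel>S x\<parallel> \<le> c / (2 * (C' + 1))"
    using approx[of "c / (2 * (C' + 1))"] \<open>0 < c\<close> unfolding S_def C'_def by auto
  have "c \<le> C' * \<parallel>S x\<parallel>"
    using x C'[of "S x"] the_inv_into_f_f[OF bij_betw_imp_inj_on[OF bij]] by fastforce
  also have "\<dots> \<le> C' * (c / (2 * (C' + 1)))" using Sx \<open>0 \<le> C'\<close> by (rule mult_left_mono)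
  also have "\<dots> < c"
    using \<open>0 < c\<close> \<open>0 \<le> C'\<close> by (simp add: field_simps add_nonneg_pos)
  finally show False by simp
qed

end

locale self_adjoint_operator = hilbert_space +
  fixes D :: "'a set" and A :: "'a \<Rightarrow> 'a"
  assumes self_adjoint: "self_adjoint_op scl ip D A"
begin

lemma domain_zero: "0 \<in> D"
  and domain_add: "x \<in> D \<Longrightarrow> y \<in> D \<Longrightarrow> x + y \<in> D"
  and domain_scale: "x \<in> D \<Longrightarrow> scl a x \<in> D"
  and A_add: "x \<in> D \<Longrightarrow> y \<in> D \<Longrightarrow> A (x + y) = A x + A y"
  and A_scale: "x \<in> D \<Longrightarrow> A (scl a x) = scl a (A x)"
  and A_symmetric: "x \<in> D \<Longrightarrow> y \<in> D \<Longrightarrow> ip (A x) y = ip x (A y)"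
  and A_adjoint: "(\<And>x. x \<in> D \<Longrightarrow> ip (A x) y = ip x w) \<Longrightarrow> y \<in> D \<and> A y = w"
  using self_adjoint unfolding self_adjoint_op_def linear_op_on_def by blast+

lemma domain_diff: "x \<in> D \<Longrightarrow> y \<in> D \<Longrightarrow> x - y \<in> D"
  using domain_add[of x "scl (-1) y"] domain_scale[of y "-1"] by simp

lemma A_diff: "x \<in> D \<Longrightarrow> y \<in> D \<Longrightarrow> A (x - y) = A x - A y"
  using A_add[of x "scl (-1) y"] A_scale[of y "-1"] domain_scale[of y "-1"] by simp

lemma A_zero: "A 0 = 0"
  using A_scale[OF domain_zero, of 0] by simp

lemma shift_add:
  "x \<in> D \<Longrightarrow> y \<in> D \<Longrightarrow> scl z (x + y) - A (x + y) = (scl z x - A x) + (scl z y - A y)"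
  by (simp add: A_add vs.scale_right_distrib)

lemma shift_scale: "x \<in> D \<Longrightarrow> scl z (scl a x) - A (scl a x) = scl a (scl z x - A x)"
  by (simp add: A_scale vs.scale_right_diff_distrib mult.commute)

lemma shift_diff:
  "x \<in> D \<Longrightarrow> y \<in> D \<Longrightarrow> scl z (x - y) - A (x - y) = (scl z x - A x) - (scl z y - A y)"
  by (simp add: A_diff vs.scale_right_diff_distrib)

lemma shift_symmetric:
  "cnj z = z \<Longrightarrow> x \<in> D \<Longrightarrow> y \<in> D \<Longrightarrow> ip (scl z x - A x) y = ip x (scl z y - A y)"
  by (simp add: ip_diff_left ip_diff_right ip_scale_left ip_scale_right A_symmetric)

lemma graph_closed:
  assumes "\<And>k. xs k \<in> D" and "converges_to xs x" and "converges_to (\<lambda>k. A (xs k)) y"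
  shows "x \<in> D \<and> A x = y"
proof (rule A_adjoint)
  fix w assume "w \<in> D"
  have "(\<lambda>k. ip (A w) (xs k)) \<longlonglongrightarrow> ip (A w) x"
    using assms(2) by (rule converges_to_ip_right)
  moreover have "(\<lambda>k. ip (A w) (xs k)) \<longlonglongrightarrow> ip w y"
    using converges_to_ip_right[OF assms(3)] by (simp add: A_symmetric[OF \<open>w \<in> D\<close> assms(1)])
  ultimately show "ip (A w) x = ip w y" by (rule LIMSEQ_unique)
qed

lemma shift_image_midpoint:
  assumes "u \<in> (\<lambda>x. scl z x - A x) ` D" and "v \<in> (\<lambda>x. scl z x - A x) ` D"
  shows "scl (1/2) (u + v) \<in> (\<lambda>x. scl z x - A x) ` D"
proof -
  obtain x y where xy: "x \<in> D" "y \<in> D" and "u = scl z x - A x" "v = scl z y - A y"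
    using assms by blast
  hence "scl (1/2) (u + v) = scl z (scl (1/2) (x + y)) - A (scl (1/2) (x + y))"
    by (simp only: shift_scale[OF domain_add[OF xy]] shift_add[OF xy])
  moreover have "scl (1/2) (x + y) \<in> D" using xy by (simp add: domain_add domain_scale)
  ultimately show ?thesis by (rule image_eqI[where f = "\<lambda>x. scl z x - A x"])
qed

lemma best_approximation_exists:
  assumes "0 < c" and lb: "\<And>x. x \<in> D \<Longrightarrow> c * \<parallel>x\<parallel> \<le> \<parallel>scl z x - A x\<parallel>"
  shows "\<exists>x0\<in>D. \<forall>x\<in>D. \<parallel>f - (scl z x0 - A x0)\<parallel> \<le> \<parallel>f - (scl z x - A x)\<parallel>"
proof -
  define S where "S x = scl z x - A x" for x
  have mid: "scl (1/2) (u + v) \<in> S ` D" if "u \<in> S ` D" "v \<in> S ` D" for u v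
    using shift_image_midpoint that unfolding S_def by blast
  obtain d K ss where d: "\<And>s. s \<in> S ` D \<Longrightarrow> d \<le> \<parallel>f - s\<parallel>"
    and ss: "\<And>k. ss k \<in> S ` D" and near: "\<And>k. \<parallel>f - ss k\<parallel> \<le> d + 1 / (real k + 1)"
    and cauchy: "\<And>j k. \<parallel>ss j - ss k\<parallel>^2 \<le> K * (1 / (real j + 1) + 1 / (real k + 1))"
    by (rule minimizing_sequence[of "S 0" "S ` D" f, OF _ mid]) (use domain_zero in blast)+
  have "\<forall>k. \<exists>x. x \<in> D \<and> ss k = S x" using ss by blast
  then obtain xs where xs: "\<And>k. xs k \<in> D" and ss_eq: "\<And>k. ss k = S (xs k)" by metis
  have "\<parallel>xs j - xs k\<parallel>^2 \<le> (K / c^2) * (1 / (real j + 1) + 1 / (real k + 1))" for j k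
  proof -
    have "(c * \<parallel>xs j - xs k\<parallel>)^2 \<le> \<parallel>ss j - ss k\<parallel>^2"
      using lb[OF domain_diff[OF xs xs]] \<open>0 < c\<close> shift_diff[OF xs xs]
      unfolding ss_eq S_def by (intro power_mono) auto
    hence "c^2 * \<parallel>xs j - xs k\<parallel>^2 \<le> K * (1 / (real j + 1) + 1 / (real k + 1))"
      using cauchy[of j k] by (simp add: power_mult_distrib)
    hence "\<parallel>xs j - xs k\<parallel>^2 \<le> K * (1 / (real j + 1) + 1 / (real k + 1)) / c^2"
      using \<open>0 < c\<close> by (simp add: pos_le_divide_eq mult.commute)
    thus ?thesis by simp
  qed
  then obtain x0 where x0: "converges_to xs x0" using converges_if_sq_dist_le by blast
  obtain g where g: "converges_to ss g" using converges_if_sq_dist_le cauchy by blast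
  have "converges_to (\<lambda>k. scl z (xs k) + scl (-1) (ss k)) (scl z x0 + scl (-1) g)"
    using converges_to_lincomb[OF x0 g] .
  hence "converges_to (\<lambda>k. A (xs k)) (scl z x0 - g)" by (simp add: ss_eq S_def)
  hence "x0 \<in> D \<and> A x0 = scl z x0 - g" using graph_closed[OF xs x0] by blast
  hence "x0 \<in> D" and "S x0 = g" unfolding S_def by simp_all
  moreover have "\<parallel>f - g\<parallel> \<le> \<parallel>f - S x\<parallel>" if "x \<in> D" for x
    using hn_le_of_converges_to[OF g near] d[of "S x"] that by simp
  ultimately show ?thesis unfolding S_def by blast
qed

lemma shift_surj_if_bounded_below:
  assumes "0 < c" and lb: "\<And>x. x \<in> D \<Longrightarrow> c * \<parallel>x\<parallel> \<le> \<parallel>scl z x - A x\<parallel>"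
    and ker: "\<And>y. y \<in> D \<Longrightarrow> A y = scl (cnj z) y \<Longrightarrow> y = 0"
  shows "\<exists>x\<in>D. scl z x - A x = f"
proof -
  obtain x0 where x0: "x0 \<in> D"
    and min: "\<And>x. x \<in> D \<Longrightarrow> \<parallel>f - (scl z x0 - A x0)\<parallel> \<le> \<parallel>f - (scl z x - A x)\<parallel>"
    using best_approximation_exists[OF assms(1,2), of f] by blast
  define r where "r = f - (scl z x0 - A x0)"
  have orth: "ip (scl z w - A w) r = 0" if w: "w \<in> D" for w
  proof (rule orthogonal_if_minimal_along)
    fix b
    have eq: "r - scl b (scl z w - A w) = f - (scl z (x0 + scl b w) - A (x0 + scl b w))"
      unfolding r_def shift_add[OF x0 domain_scale[OF w]] shift_scale[OF w] by (simp only: diff_diff_eq)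
    show "\<parallel>r\<parallel> \<le> \<parallel>r - scl b (scl z w - A w)\<parallel>"
      unfolding eq unfolding r_def by (rule min[OF domain_add[OF x0 domain_scale[OF w]]])
  qed
  have "r \<in> D \<and> A r = scl (cnj z) r"
  proof (rule A_adjoint)
    fix w assume "w \<in> D"
    have "ip (A w) r = z * ip w r"
      using orth[OF \<open>w \<in> D\<close>] by (simp add: ip_diff_left ip_scale_left)
    thus "ip (A w) r = ip w (scl (cnj z) r)" by (simp add: ip_scale_right)
  qed
  hence "r = 0" using ker by blast
  hence "scl z x0 - A x0 = f" unfolding r_def by simp
  thus ?thesis using x0 by blast
qed

lemma not_in_spectrum_if_bounded_below:
  assumes "0 < c" and lb: "\<And>x. x \<in> D \<Longrightarrow> c * \<parallel>x\<parallel> \<le> \<parallel>scl z x - A x\<parallel>"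
    and ker: "\<And>y. y \<in> D \<Longrightarrow> A y = scl (cnj z) y \<Longrightarrow> y = 0"
  shows "z \<notin> op_spectrum scl ip D A"
proof -
  define S where "S x = scl z x - A x" for x
  have inj: "inj_on S D"
  proof (rule inj_onI)
    fix x y assume xy: "x \<in> D" "y \<in> D" and "S x = S y"
    hence "scl z (x - y) - A (x - y) = 0" unfolding S_def shift_diff[OF xy] by simp
    hence "c * \<parallel>x - y\<parallel> \<le> 0" using lb[OF domain_diff[OF xy]] by simp
    thus "x = y" using \<open>0 < c\<close> by (simp add: mult_le_0_iff)
  qed
  have surj: "S ` D = UNIV"
  proof -
    have "f \<in> S ` D" for f
    proof -
      obtain x where "x \<in> D" "S x = f"
        using shift_surj_if_bounded_below[OF \<open>0 < c\<close> lb ker, of f] unfolding S_def by blast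
      thus ?thesis by blast
    qed
    thus ?thesis by blast
  qed
  have "\<parallel>the_inv_into D S y\<parallel> \<le> (1 / c) * \<parallel>y\<parallel>" for y
  proof -
    have "the_inv_into D S y \<in> D" using the_inv_into_into[OF inj] surj by blast
    moreover have "S (the_inv_into D S y) = y" using f_the_inv_into_f[OF inj] surj by blast
    ultimately have "c * \<parallel>the_inv_into D S y\<parallel> \<le> \<parallel>y\<parallel>" using lb unfolding S_def by metis
    thus ?thesis using \<open>0 < c\<close> by (simp add: pos_le_divide_eq mult.commute)
  qed
  moreover have "bij_betw S D UNIV" using inj surj by (simp add: bij_betw_def)
  ultimately show ?thesis unfolding op_spectrum_def S_def by blast
qed

lemma A_form_real:
  assumes "x \<in> D"
  shows "Im (ip (A x) x) = 0"
proof -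
  have "ip (A x) x = cnj (ip (A x) x)"
    using A_symmetric[OF assms assms] ip_cnj_commute[of x "A x"] by simp
  hence "Im (ip (A x) x) = - Im (ip (A x) x)" by (metis cnj.sel(2))
  thus ?thesis by simp
qed

lemma shift_bounded_below_nonreal: "x \<in> D \<Longrightarrow> \<bar>Im z\<bar> * \<parallel>x\<parallel> \<le> \<parallel>scl z x - A x\<parallel>"
proof -
  assume "x \<in> D"
  have "Im (ip (scl z x - A x) x) = Im z * \<parallel>x\<parallel>^2"
    using A_form_real[OF \<open>x \<in> D\<close>] by (simp add: ip_diff_left ip_scale_left ip_self)
  hence "\<bar>Im z\<bar> * \<parallel>x\<parallel> * \<parallel>x\<parallel> = \<bar>Im (ip (scl z x - A x) x)\<bar>"
    by (simp add: abs_mult power2_eq_square)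
  also have "\<dots> \<le> cmod (ip (scl z x - A x) x)" by (rule abs_Im_le_cmod)
  also have "\<dots> \<le> \<parallel>scl z x - A x\<parallel> * \<parallel>x\<parallel>" by (rule ip_cauchy_schwarz)
  finally show ?thesis
    by (cases "x = 0") (simp_all add: mult_le_cancel_right_pos)
qed

lemma spectrum_subset_Reals: "op_spectrum scl ip D A \<subseteq> \<real>"
proof
  fix z assume z: "z \<in> op_spectrum scl ip D A"
  show "z \<in> \<real>"
  proof (rule ccontr)
    assume "z \<notin> \<real>"
    hence pos: "0 < \<bar>Im z\<bar>" using complex_is_Real_iff by auto
    have ker: "y = 0" if "y \<in> D" "A y = scl (cnj z) y" for y
      using shift_bounded_below_nonreal[OF that(1), of "cnj z"] that(2) \<open>0 < \<bar>Im z\<bar>\<close>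
      by (simp add: mult_le_0_iff)
    have "z \<notin> op_spectrum scl ip D A"
      by (rule not_in_spectrum_if_bounded_below[OF pos shift_bounded_below_nonreal ker])
    thus False using z by blast
  qed
qed

lemma real_not_in_spectrum_if_bounded_below:
  assumes "0 < c" and lb: "\<And>x. x \<in> D \<Longrightarrow> c * \<parallel>x\<parallel> \<le> \<parallel>scl (of_real m) x - A x\<parallel>"
  shows "of_real m \<notin> op_spectrum scl ip D A"
proof (rule not_in_spectrum_if_bounded_below[OF assms])
  fix y assume "y \<in> D" "A y = scl (cnj (of_real m)) y"
  thus "y = 0" using lb[of y] \<open>0 < c\<close> by (simp add: mult_le_0_iff)
qed

lemma shift_bounded_below_perturb:
  assumes lb: "\<And>x. x \<in> D \<Longrightarrow> c * \<parallel>x\<parallel> \<le> \<parallel>scl l x - A x\<parallel>" and "x \<in> D"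
  shows "(c - cmod d) * \<parallel>x\<parallel> \<le> \<parallel>scl (l + d) x - A x\<parallel>"
proof -
  have eq: "scl l x - A x = (scl (l + d) x - A x) + - scl d x"
    by (simp add: vs.scale_left_distrib)
  have "\<parallel>scl l x - A x\<parallel> \<le> \<parallel>scl (l + d) x - A x\<parallel> + \<parallel>scl d x\<parallel>"
    unfolding eq using hn_triangle[of "scl (l + d) x - A x" "- scl d x"] by (simp only: hn_minus)
  thus ?thesis using lb[OF \<open>x \<in> D\<close>] by (simp add: hn_scale algebra_simps)
qed

section \<open>Resolvents\<close>

definition resolvent :: "complex \<Rightarrow> 'a \<Rightarrow> 'a" where
  "resolvent z = the_inv_into D (\<lambda>x. scl z x - A x)"

lemma
  assumes "z \<notin> op_spectrum scl ip D A"
  shows resolvent_in_domain: "resolvent z y \<in> D"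
    and shift_resolvent: "scl z (resolvent z y) - A (resolvent z y) = y"
    and resolvent_shift: "x \<in> D \<Longrightarrow> resolvent z (scl z x - A x) = x"
    and resolvent_bounded: "bounded_op ip (resolvent z)"
proof -
  have bij: "bij_betw (\<lambda>x. scl z x - A x) D UNIV"
    and bound: "\<exists>C. \<forall>y. \<parallel>resolvent z y\<parallel> \<le> C * \<parallel>y\<parallel>"
    using assms unfolding op_spectrum_def resolvent_def by blast+
  have inj: "inj_on (\<lambda>x. scl z x - A x) D" and im: "(\<lambda>x. scl z x - A x) ` D = UNIV"
    using bij unfolding bij_betw_def by auto
  show "resolvent z y \<in> D" unfolding resolvent_def using the_inv_into_into[OF inj] im by blast
  show "scl z (resolvent z y) - A (resolvent z y) = y"
    unfolding resolvent_def using f_the_inv_into_f[OF inj] im by blast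
  show "x \<in> D \<Longrightarrow> resolvent z (scl z x - A x) = x"
    unfolding resolvent_def by (rule the_inv_into_f_f[OF inj])
  show "bounded_op ip (resolvent z)" unfolding bounded_op_def by (rule bound)
qed

lemma shift_bounded_below_if_not_in_spectrum:
  assumes "z \<notin> op_spectrum scl ip D A"
  obtains c where "0 < c" and "\<And>x. x \<in> D \<Longrightarrow> c * \<parallel>x\<parallel> \<le> \<parallel>scl z x - A x\<parallel>"
proof -
  obtain C where "0 \<le> C" and C: "\<And>y. \<parallel>resolvent z y\<parallel> \<le> C * \<parallel>y\<parallel>"
    using bounded_opE[OF resolvent_bounded[OF assms]] by blast
  have "(1 / (C + 1)) * \<parallel>x\<parallel> \<le> \<parallel>scl z x - A x\<parallel>" if "x \<in> D" for x
  proof -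
    have "\<parallel>x\<parallel> \<le> C * \<parallel>scl z x - A x\<parallel>"
      using C[of "scl z x - A x"] resolvent_shift[OF assms that] by simp
    also have "\<dots> \<le> (C + 1) * \<parallel>scl z x - A x\<parallel>" by (simp add: distrib_right)
    finally show ?thesis using \<open>0 \<le> C\<close> by (simp add: field_simps)
  qed
  moreover have "0 < 1 / (C + 1)" using \<open>0 \<le> C\<close> by simp
  ultimately show thesis using that by blast
qed

lemma bounded_hermitian_resolvent:
  assumes "of_real l \<notin> op_spectrum scl ip D A"
  shows "bounded_hermitian (resolvent (of_real l))"
proof -
  define R where "R = resolvent (of_real l)"
  have RD: "R y \<in> D" and SR: "scl (of_real l) (R y) - A (R y) = y"
    and RS: "x \<in> D \<Longrightarrow> R (scl (of_real l) x - A x) = x" for x y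
    unfolding R_def using resolvent_in_domain shift_resolvent resolvent_shift assms by blast+
  have "R (x + y) = R x + R y" for x y
    using RS[OF domain_add[OF RD RD]] by (simp add: shift_add[OF RD RD] SR)
  moreover have "R (scl a x) = scl a (R x)" for a x
    using RS[OF domain_scale[OF RD, of a x]] by (simp only: shift_scale[OF RD] SR)
  moreover have "ip (R x) y = ip x (R y)" for x y
    using shift_symmetric[OF _ RD RD, of "of_real l" x y] by (simp add: SR)
  ultimately show ?thesis
    using resolvent_bounded[OF assms] unfolding bounded_hermitian_def R_def by blast
qed

lemma shift_resolvent_diff:
  fixes y :: 'a
  assumes "l \<notin> op_spectrum scl ip D A" and "m \<notin> op_spectrum scl ip D A"
  defines "u \<equiv> resolvent l y" and "v \<equiv> resolvent m y"
  shows "scl m (u - v) - A (u - v) = scl (m - l) u"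
proof -
  have uD: "u \<in> D" and vD: "v \<in> D" unfolding u_def v_def using assms resolvent_in_domain by auto
  have "scl m (u - v) - A (u - v) = (scl m u - A u) - (scl m v - A v)" by (rule shift_diff[OF uD vD])
  also have "\<dots> = (scl l u - A u) + scl (m - l) u - y"
    using shift_resolvent[OF assms(2)] unfolding v_def
    by (simp add: algebra_simps)
  also have "\<dots> = scl (m - l) u" using shift_resolvent[OF assms(1)] unfolding u_def by simp
  finally show ?thesis .
qed

lemma in_perturbed_spectrum_if_approx:
  assumes l: "l \<notin> op_spectrum scl ip D A" and "0 < c"
    and approx: "\<And>\<epsilon>. 0 < \<epsilon> \<Longrightarrow>
      \<exists>y. c \<le> \<parallel>resolvent l y\<parallel> \<and> \<parallel>y - scl s (B (resolvent l y))\<parallel> \<le> \<epsilon>"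
  shows "l \<in> op_spectrum scl ip D (\<lambda>x. A x + scl s (B x))"
proof (rule approx_eigenvalue_in_spectrum[OF \<open>0 < c\<close>])
  fix \<epsilon> :: real assume "0 < \<epsilon>"
  then obtain y where "c \<le> \<parallel>resolvent l y\<parallel>" and "\<parallel>y - scl s (B (resolvent l y))\<parallel> \<le> \<epsilon>"
    using approx by blast
  moreover have "scl l (resolvent l y) - (A (resolvent l y) + scl s (B (resolvent l y)))
      = y - scl s (B (resolvent l y))"
    using shift_resolvent[OF l, of y] by (simp add: algebra_simps)
  ultimately show "\<exists>x\<in>D. c \<le> \<parallel>x\<parallel> \<and> \<parallel>scl l x - (A x + scl s (B x))\<parallel> \<le> \<epsilon>"
    using resolvent_in_domain[OF l] by metis
qed

text \<open>Birman-Schwinger: with Q = sgn(c) R, where c = (R Bx0, Bx0) for the resolvent R at l,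
  approximate eigenvectors Bx of BQ with eigenvalue M > 0 give the approximate eigenvectors
  R Bx of A + (sgn(c) / M) B with eigenvalue l.\<close>

lemma in_perturbed_spectrum_if_resolvent_form_nonzero:
  assumes B: "bounded_hermitian B" "nonneg_op ip B"
    and l: "of_real l \<notin> op_spectrum scl ip D A"
    and ne: "ip (resolvent (of_real l) (B x0)) (B x0) \<noteq> 0"
  shows "\<exists>t::real. of_real l \<in> op_spectrum scl ip D (\<lambda>x. A x + scl (of_real t) (B x))"
proof -
  define R where "R = resolvent (of_real l)"
  have R: "bounded_hermitian R" unfolding R_def by (rule bounded_hermitian_resolvent[OF l])
  obtain \<sigma> :: real where "\<bar>\<sigma>\<bar> = 1" and pos: "0 < Re (ip (scl (of_real \<sigma>) (R (B x0))) (B x0))"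
    using sign_hermitian_form_pos[OF bounded_hermitianD(3)[OF R]] ne unfolding R_def by blast
  define Q where "Q y = scl (of_real \<sigma>) (R y)" for y
  have Q: "bounded_hermitian Q"
    unfolding Q_def[abs_def] by (rule bounded_hermitian_scale_real[OF R])
  obtain M where "0 < M" and approx: "\<And>e. 0 < e \<Longrightarrow> \<exists>x. Re (ip (B x) x) \<le> 1
      \<and> M - e \<le> Re (ip (Q (B x)) (B x)) \<and> \<parallel>scl (of_real M) (B x) - B (Q (B x))\<parallel> \<le> e"
    using BQ_approx_eigenvector[OF B Q] pos unfolding Q_def by blast
  obtain Kb where "0 \<le> Kb" and Kb: "\<And>x. \<parallel>B x\<parallel> \<le> Kb * \<parallel>x\<parallel>"
    using bounded_opE[OF bounded_hermitianD(4)[OF B(1)]] by blast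
  have "of_real l \<in> op_spectrum scl ip D (\<lambda>x. A x + scl (of_real (\<sigma> / M)) (B x))"
  proof (rule in_perturbed_spectrum_if_approx[OF l, of "M / 2 / (sqrt Kb + 1)"])
    show "0 < M / 2 / (sqrt Kb + 1)" using \<open>0 < M\<close> \<open>0 \<le> Kb\<close> by (simp add: add_nonneg_pos)
    fix \<epsilon> :: real assume "0 < \<epsilon>"
    then obtain x where q: "Re (ip (B x) x) \<le> 1" and h: "M / 2 \<le> Re (ip (Q (B x)) (B x))"
      and r: "\<parallel>scl (of_real M) (B x) - B (Q (B x))\<parallel> \<le> M * \<epsilon>"
      using approx[of "min (M / 2) (M * \<epsilon>)"] \<open>0 < M\<close> by fastforce
    have eq: "B x - scl (of_real (\<sigma> / M)) (B (R (B x)))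
        = scl (of_real (1 / M)) (scl (of_real M) (B x) - B (Q (B x)))"
      using \<open>0 < M\<close> by (simp add: Q_def bounded_hermitianD(2)[OF B(1)] algebra_simps)
    have "\<parallel>B x - scl (of_real (\<sigma> / M)) (B (R (B x)))\<parallel> \<le> \<epsilon>"
      unfolding eq hn_scale using r \<open>0 < M\<close> by (simp add: norm_divide field_simps)
    moreover have "M / 2 / (sqrt Kb + 1) \<le> \<parallel>Q (B x)\<parallel>"
      using order_trans[OF h complex_Re_le_cmod] hn_le_sqrt_if_form_le_1[OF B Kb \<open>0 \<le> Kb\<close> q]
      by (rule hn_ge_if_cmod_ip_ge)
    hence "M / 2 / (sqrt Kb + 1) \<le> \<parallel>R (B x)\<parallel>" using \<open>\<bar>\<sigma>\<bar> = 1\<close> by (simp add: Q_def hn_scale)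
    ultimately show "\<exists>y. M / 2 / (sqrt Kb + 1) \<le> \<parallel>resolvent (of_real l) y\<parallel>
        \<and> \<parallel>y - scl (of_real (\<sigma> / M)) (B (resolvent (of_real l) y))\<parallel> \<le> \<epsilon>"
      unfolding R_def by blast
  qed
  thus ?thesis by blast
qed

lemma resolvents_orthogonal_if_forms_vanish:
  assumes l: "of_real l \<notin> op_spectrum scl ip D A" and m: "of_real m \<notin> op_spectrum scl ip D A"
    and "l \<noteq> m" and vanish: "ip (resolvent (of_real l) y) y = 0" "ip (resolvent (of_real m) y) y = 0"
  shows "ip (resolvent (of_real l) y) (resolvent (of_real m) y) = 0"
proof -
  define u v where "u = resolvent (of_real l) y" and "v = resolvent (of_real m) y"
  have uD: "u \<in> D" and vD: "v \<in> D" unfolding u_def v_def using l m resolvent_in_domain by auto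
  have "of_real (m - l) * ip u v = ip (scl (of_real m) (u - v) - A (u - v)) v"
    using shift_resolvent_diff[OF l m, of y] by (simp add: u_def v_def ip_scale_left)
  also have "\<dots> = ip (u - v) (scl (of_real m) v - A v)"
    by (rule shift_symmetric[OF _ domain_diff[OF uD vD] vD]) simp
  also have "\<dots> = 0"
    using shift_resolvent[OF m] vanish by (simp add: u_def v_def ip_diff_left)
  finally show ?thesis using \<open>l \<noteq> m\<close> unfolding u_def v_def by simp
qed

lemma eq_0_if_resolvent_forms_vanish:
  assumes l: "of_real l \<notin> op_spectrum scl ip D A"
    and vanish: "\<And>m. of_real m \<notin> op_spectrum scl ip D A \<Longrightarrow> ip (resolvent (of_real m) y) y = 0"
  shows "y = 0"
proof -
  obtain c where "0 < c" and lb: "\<And>x. x \<in> D \<Longrightarrow> c * \<parallel>x\<parallel> \<le> \<parallel>scl (of_real l) x - A x\<parallel>"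
    using shift_bounded_below_if_not_in_spectrum[OF l] by blast
  define m where "m = l + c / 4"
  have lb_m: "(3 * c / 4) * \<parallel>x\<parallel> \<le> \<parallel>scl (of_real m) x - A x\<parallel>" if "x \<in> D" for x
    using shift_bounded_below_perturb[OF lb that, of "of_real (c / 4)"] \<open>0 < c\<close>
    by (simp add: m_def algebra_simps)
  have m: "of_real m \<notin> op_spectrum scl ip D A"
    by (rule real_not_in_spectrum_if_bounded_below[OF _ lb_m]) (use \<open>0 < c\<close> in simp)
  define u v where "u = resolvent (of_real l) y" and "v = resolvent (of_real m) y"
  have uD: "u \<in> D" and vD: "v \<in> D" unfolding u_def v_def using l m resolvent_in_domain by auto
  have "ip u v = 0"
    unfolding u_def v_def using \<open>0 < c\<close>
    by (intro resolvents_orthogonal_if_forms_vanish[OF l m] vanish l m) (simp add: m_def)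
  have "(3 * c / 4) * \<parallel>u - v\<parallel> \<le> (c / 4) * \<parallel>u\<parallel>"
    using lb_m[OF domain_diff[OF uD vD]] shift_resolvent_diff[OF l m, of y] \<open>0 < c\<close>
    by (simp add: u_def v_def m_def hn_scale)
  hence "\<parallel>u - v\<parallel> \<le> \<parallel>u\<parallel> / 3" using \<open>0 < c\<close> by (simp add: field_simps)
  have "\<parallel>u\<parallel>^2 = Re (ip u (u - v))" using \<open>ip u v = 0\<close> by (simp add: ip_diff_right hn_sq)
  also have "\<dots> \<le> \<parallel>u\<parallel> * \<parallel>u - v\<parallel>" using complex_Re_le_cmod ip_cauchy_schwarz order_trans by blast
  also have "\<dots> \<le> \<parallel>u\<parallel> * (\<parallel>u\<parallel> / 3)" using \<open>\<parallel>u - v\<parallel> \<le> \<parallel>u\<parallel> / 3\<close> by (rule mult_left_mono) simp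
  finally have "\<parallel>u\<parallel>^2 \<le> \<parallel>u\<parallel>^2 / 3" by (simp add: power2_eq_square)
  hence "u = 0" by simp
  thus "y = 0" using shift_resolvent[OF l, of y] A_zero unfolding u_def by simp
qed

end

theorem corollary1p2:
  fixes scl :: "complex \<Rightarrow> 'a::ab_group_add \<Rightarrow> 'a"
    and ip :: "'a \<Rightarrow> 'a \<Rightarrow> complex"
    and D :: "'a set" and A B :: "'a \<Rightarrow> 'a"
  assumes "complex_hilbert_space scl ip"
    and "self_adjoint_op scl ip D A"
    and "self_adjoint_op scl ip UNIV B"
    and "bounded_op ip B"
    and "nonneg_op ip B"
    and "\<forall>t::real. op_spectrum scl ip D (\<lambda>x. A x + scl (complex_of_real t) (B x))
                   = op_spectrum scl ip D A"
  shows "(\<forall>x. B x = 0) \<or> op_spectrum scl ip D A = \<real>"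
proof -
  interpret self_adjoint_operator scl ip D A
    using assms(1,2) by (simp add: self_adjoint_operator_def self_adjoint_operator_axioms_def
        hilbert_space_def)
  have B: "bounded_hermitian B"
    using assms(3,4) unfolding bounded_hermitian_def self_adjoint_op_def linear_op_on_def by blast
  have vanish: "ip (resolvent (of_real m) (B x)) (B x) = 0"
    if "of_real m \<notin> op_spectrum scl ip D A" for m x
    using in_perturbed_spectrum_if_resolvent_form_nonzero[OF B assms(5) that] assms(6) that by metis
  show ?thesis
  proof (cases "\<exists>l. of_real l \<notin> op_spectrum scl ip D A")
    case True
    then obtain l where "of_real l \<notin> op_spectrum scl ip D A" by blast
    hence "\<forall>x. B x = 0" using eq_0_if_resolvent_forms_vanish vanish by blast
    thus ?thesis by blast
  next
    case False
    hence "\<real> \<subseteq> op_spectrum scl ip D A" by (auto elim: Reals_cases)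
    thus ?thesis using spectrum_subset_Reals by blast
  qed
qed

end
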